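(* Let $M,N\ge3$ be integers with $M$ divisible by $(7^{N+1})!$. Let $I_1$ be the sequence consisting of $N$ batches of $M$ identical items each, with item sizes $\frac1{7^N},\frac1{7^{N-1}},\dots,\frac17$ in this order. Let $J_3$ be $I_1$ followed by $M$ items of size $\frac13$; let $J_2$ be $J_3$ followed by $M$ items of size $\frac12$; let $J_{22}$ be $J_3$ followed by $2M$ items of size $\frac12$; and let $J_1$ be $J_2$ followed by $M$ items of size $1$. Then $\mathrm{OPT}(J_3)\le\frac{3M}8$, $\mathrm{OPT}(J_2)\le\frac{2M}3$, $\mathrm{OPT}(J_{22})\le M$ and $\mathrm{OPT}(J_1)\le M$.
   Context: Ordered Open End Bin Packing: a sequence of items with sizes in $(0,1]$ must be packed into bins in sequence order, where an item may be added to a bin only if the bin's current total size is strictly below $1$; equivalently, in each bin the total size of all items except the one appearing last in the sequence is strictly below $1$. $\mathrm{OPT}(I)$ is the minimum number of bins of such a packing of the sequence $I$. *)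

theory Defs
  imports Complex_Main
begin

text \<open>Ordered Open End Bin Packing.\<close>

definition oe_valid_packing :: "real list \<Rightarrow> (nat \<Rightarrow> nat) \<Rightarrow> bool" where
  "oe_valid_packing xs f \<longleftrightarrow>
     (\<forall>i < length xs. (\<Sum>j \<in> {j. j < i \<and> f j = f i}. xs ! j) < 1)"

definition bins_used :: "real list \<Rightarrow> (nat \<Rightarrow> nat) \<Rightarrow> nat" where
  "bins_used xs f = card (f ` {..<length xs})"

definition OPT :: "real list \<Rightarrow> nat" where
  "OPT xs = (LEAST k. \<exists>f. oe_valid_packing xs f \<and> bins_used xs f = k)"

definition seqI1 :: "nat \<Rightarrow> nat \<Rightarrow> real list" where
  "seqI1 M N = concat (map (\<lambda>k. replicate M (1 / 7 ^ (N - k))) [0..<N])"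

end

theory Submission
  imports Defs
begin

text \<open>Split the sequence into batches of M equal items and pack each batch by a list of M bin
labels. As sizes are nonnegative, a packing is open-end feasible once in every bin the items other
than the last one sum to less than 1. One item from each of the N batches of I_1 has total size
(1 - 7^-N)/6 < 1/6, so I_1 behaves like M items of size below 1/6. Let M = 24t.
For J_3, 6t bins get two such columns and three items 1/3, and 3t bins get four columns and two
items 1/3: the loads before the last item are below 2/6 + 2/3 and 4/6 + 1/3, with 9t = 3M/8 bins.
For J_2, 8t bins get two columns, two items 1/3 and one 1/2, and 8t bins get one column, one 1/3
and two 1/2: the loads are below 2/6 + 2/3 and 1/6 + 1/3 + 1/2, with 16t = 2M/3 bins.
For J_22 and J_1 each of M bins receives one item of every batch.\<close>

lemma OPT_le:
  assumes "oe_valid_packing xs f" and "\<And>i. i < length xs \<Longrightarrow> f i < B"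
  shows "OPT xs \<le> B"
proof -
  have "f ` {..<length xs} \<subseteq> {..<B}" using assms(2) by auto
  then have "bins_used xs f \<le> B"
    unfolding bins_used_def by (metis card_lessThan card_mono finite_lessThan)
  moreover have "OPT xs \<le> bins_used xs f"
    unfolding OPT_def by (rule Least_le) (use assms(1) in blast)
  ultimately show ?thesis by linarith
qed

definition bin_content :: "'a list \<Rightarrow> (nat \<Rightarrow> nat) \<Rightarrow> nat \<Rightarrow> 'a list" where
  "bin_content xs f b = map (nth xs) (filter (\<lambda>j. f j = b) [0..<length xs])"

lemma set_bin_content: "set (bin_content xs f b) \<subseteq> set xs"
  unfolding bin_content_def by auto

lemma oe_valid_packingI_bin_content:
  assumes nonneg: "\<And>x. x \<in> set xs \<Longrightarrow> 0 \<le> x"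
    and bins: "\<And>b. sum_list (butlast (bin_content xs f b)) < 1"
  shows "oe_valid_packing xs f"
  unfolding oe_valid_packing_def
proof (intro allI impI)
  fix i assume i: "i < length xs"
  define before where "before = map (nth xs) (filter (\<lambda>j. f j = f i) [0..<i])"
  obtain rest where rest: "bin_content xs f (f i) = before @ xs ! i # rest"
  proof
    have "[0..<length xs] = [0..<i] @ [i..<length xs]"
      using upt_add_eq_append[of 0 i "length xs - i"] i by simp
    also have "[i..<length xs] = i # [Suc i..<length xs]"
      using i by (rule upt_conv_Cons)
    finally show "bin_content xs f (f i) =
        before @ xs ! i # map (nth xs) (filter (\<lambda>j. f j = f i) [Suc i..<length xs])"
      unfolding bin_content_def before_def by simp
  qed
  have "0 \<le> sum_list (butlast (xs ! i # rest))"
  proof (rule sum_list_nonneg)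
    fix x assume "x \<in> set (butlast (xs ! i # rest))"
    then have "x \<in> set (xs ! i # rest)" by (rule in_set_butlastD)
    then have "x \<in> set (bin_content xs f (f i))" unfolding rest by auto
    then show "0 \<le> x" using set_bin_content[of xs f "f i"] nonneg by blast
  qed
  then have "sum_list before \<le> sum_list (butlast (bin_content xs f (f i)))"
    unfolding rest by (simp add: butlast_append)
  also have "\<dots> < 1" by (rule bins)
  finally have "sum_list before < 1" .
  moreover have "sum_list before = (\<Sum>j\<in>{j. j < i \<and> f j = f i}. xs ! j)"
  proof -
    have "{j. j < i \<and> f j = f i} = set (filter (\<lambda>j. f j = f i) [0..<i])" by auto
    then show ?thesis
      unfolding before_def by (metis distinct_filter distinct_upt sum_list_distinct_conv_sum_set)
  qed
  ultimately show "(\<Sum>j\<in>{j. j < i \<and> f j = f i}. xs ! j) < 1" by linarith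
qed

definition batches :: "nat \<Rightarrow> 'a list \<Rightarrow> 'a list" where
  "batches M cs = concat (map (replicate M) cs)"

lemma batches_append [simp]: "batches M (cs @ ds) = batches M cs @ batches M ds"
  by (simp add: batches_def)

lemma batches_Cons [simp]: "batches M (c # cs) = replicate M c @ batches M cs"
  by (simp add: batches_def)

lemma batches_Nil [simp]: "batches M [] = []"
  by (simp add: batches_def)

lemma length_batches: "length (batches M cs) = length cs * M"
  by (induction cs) simp_all

lemma nth_batches: "k < length cs \<Longrightarrow> r < M \<Longrightarrow> batches M cs ! (r + k * M) = cs ! k"
proof (induction cs arbitrary: k)
  case (Cons c cs)
  then show ?case by (cases k) (simp_all add: nth_append add.assoc)
qed simp

lemma upt_mult_eq_concat:
  "[0..<n * M] = concat (map (\<lambda>k. map (\<lambda>r. r + k * M) [0..<M]) [0..<n])"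
proof (induction n)
  case (Suc n)
  have "[0..<Suc n * M] = [0..<n * M] @ [n * M..<n * M + M]"
    using upt_add_eq_append[of 0 "n * M" M] by (simp add: add.commute)
  also have "[n * M..<n * M + M] = map (\<lambda>r. r + n * M) [0..<M]"
    by (simp add: map_add_upt add.commute)
  finally show ?case using Suc.IH by simp
qed simp

lemma length_filter_nth_eq_count_list:
  "length (filter (\<lambda>r. l ! r = b) [0..<length l]) = count_list l b"
proof -
  have "((=) b \<circ> nth l) = (\<lambda>r. l ! r = b)" by auto
  then have "filter ((=) b) l = map (nth l) (filter (\<lambda>r. l ! r = b) [0..<length l])"
    using filter_map[of "(=) b" "nth l" "[0..<length l]"] by (simp only: map_nth)
  then show ?thesis by (simp add: count_list_eq_length_filter)
qed

definition batch_packing :: "nat \<Rightarrow> nat list list \<Rightarrow> nat \<Rightarrow> nat" where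
  "batch_packing M ls j = ls ! (j div M) ! (j mod M)"

lemma bin_content_batches:
  assumes lengths: "length ls = length cs" "\<And>l. l \<in> set ls \<Longrightarrow> length l = M"
  shows "bin_content (batches M cs) (batch_packing M ls) b =
    concat (map (\<lambda>(c, l). replicate (count_list l b) c) (zip cs ls))"
proof -
  define block where "block k = map (\<lambda>r. r + k * M) [0..<M]" for k
  let ?in_bin = "\<lambda>j. batch_packing M ls j = b"
  have batch: "map (nth (batches M cs)) (filter ?in_bin (block k)) =
      replicate (count_list (ls ! k) b) (cs ! k)" if k: "k < length cs" for k
  proof -
    have M: "length (ls ! k) = M" using k lengths by simp
    have "filter (\<lambda>r. ?in_bin (r + k * M)) [0..<M] = filter (\<lambda>r. ls ! k ! r = b) [0..<M]"
      by (rule filter_cong) (auto simp: batch_packing_def)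
    then have "map (nth (batches M cs)) (filter ?in_bin (block k)) =
        map (\<lambda>r. batches M cs ! (r + k * M)) (filter (\<lambda>r. ls ! k ! r = b) [0..<M])"
      by (simp add: block_def filter_map comp_def)
    also have "\<dots> = map (\<lambda>r. cs ! k) (filter (\<lambda>r. ls ! k ! r = b) [0..<M])"
      by (rule map_cong[OF refl]) (simp add: nth_batches k)
    also have "\<dots> = replicate (count_list (ls ! k) b) (cs ! k)"
      using length_filter_nth_eq_count_list[of "ls ! k" b] M by (simp add: map_replicate_const)
    finally show ?thesis .
  qed
  have "bin_content (batches M cs) (batch_packing M ls) b =
      concat (map (\<lambda>k. map (nth (batches M cs)) (filter ?in_bin (block k))) [0..<length cs])"
    unfolding bin_content_def length_batches upt_mult_eq_concat block_def
    by (simp add: filter_concat map_concat comp_def)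
  also have "\<dots> = concat (map (\<lambda>k. replicate (count_list (ls ! k) b) (cs ! k)) [0..<length cs])"
    by (intro arg_cong[where f = concat] map_cong refl) (simp add: batch)
  also have "zip cs ls = map (\<lambda>k. (cs ! k, ls ! k)) [0..<length cs]"
    using lengths by (intro nth_equalityI) simp_all
  then have "concat (map (\<lambda>k. replicate (count_list (ls ! k) b) (cs ! k)) [0..<length cs]) =
      concat (map (\<lambda>(c, l). replicate (count_list l b) c) (zip cs ls))"
    by (simp add: comp_def)
  finally show ?thesis .
qed

lemma OPT_batches_le:
  assumes lengths: "length ls = length cs" "\<And>l. l \<in> set ls \<Longrightarrow> length l = M"
    and labels: "\<And>l. l \<in> set ls \<Longrightarrow> set l \<subseteq> {..<B}"
    and nonneg: "\<And>c. c \<in> set cs \<Longrightarrow> 0 \<le> c"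
    and bins: "\<And>b. sum_list (butlast
      (concat (map (\<lambda>(c, l). replicate (count_list l b) c) (zip cs ls)))) < 1"
  shows "OPT (batches M cs) \<le> B"
proof (rule OPT_le)
  show "oe_valid_packing (batches M cs) (batch_packing M ls)"
  proof (rule oe_valid_packingI_bin_content)
    show "0 \<le> x" if "x \<in> set (batches M cs)" for x
      using that nonneg by (auto simp: batches_def)
    show "sum_list (butlast (bin_content (batches M cs) (batch_packing M ls) b)) < 1" for b
      using bins by (simp add: bin_content_batches lengths)
  qed
  show "batch_packing M ls j < B" if "j < length (batches M cs)" for j
  proof -
    have "M > 0" using that by (cases M) (simp_all add: length_batches)
    then have "j div M < length ls" "j mod M < M"
      using that lengths(1) by (simp_all add: length_batches less_mult_imp_div_less)
    then show ?thesis
      unfolding batch_packing_def using labels lengths(2) by (metis lessThan_iff nth_mem subsetD)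
  qed
qed

lemma count_list_replicate: "count_list (replicate n x) y = (if x = y then n else 0)"
  by (induction n) auto

lemma count_list_batches: "count_list (batches n xs) y = n * count_list xs y"
  by (induction xs) (simp_all add: count_list_replicate)

lemma count_list_upt: "count_list [i..<j] b = (if i \<le> b \<and> b < j then 1 else 0)"
  by (induction j) auto

lemma set_batches: "set (batches n xs) \<subseteq> set xs"
  by (auto simp: batches_def)

lemma concat_map_replicate_0 [simp]: "concat (map (replicate 0) xs) = []"
  by (induction xs) simp_all

lemma sum_list_concat_replicate:
  "sum_list (concat (map (replicate n) xs)) = of_nat n * (sum_list xs :: 'a :: comm_semiring_1)"
  by (induction xs) (simp_all add: distrib_left sum_list_replicate)

lemma OPT_batches_le_batch_size:
  assumes "\<And>c. c \<in> set cs \<Longrightarrow> 0 \<le> c" and "sum_list (butlast cs) < 1"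
  shows "OPT (batches M cs) \<le> M"
proof (rule OPT_batches_le[where ls = "replicate (length cs) [0..<M]"])
  fix b
  have "concat (map (\<lambda>c. replicate (count_list [0..<M] b) c) cs) = (if b < M then cs else [])"
    by (induction cs) (simp_all add: count_list_upt)
  then show "sum_list (butlast (concat (map (\<lambda>(c, l). replicate (count_list l b) c)
      (zip cs (replicate (length cs) [0..<M]))))) < 1"
    using assms(2) by (simp add: zip_replicate2 comp_def)
qed (use assms(1) in auto)

definition block_labels :: "nat \<Rightarrow> nat \<Rightarrow> nat \<Rightarrow> nat \<Rightarrow> nat list" where
  "block_labels a s m t = batches s [0..<a] @ batches t [a..<a + m]"

lemma length_block_labels: "length (block_labels a s m t) = a * s + m * t"
  by (simp add: block_labels_def length_batches mult.commute)

lemma block_labels_less: "x \<in> set (block_labels a s m t) \<Longrightarrow> x < a + m"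
  using set_batches[of s "[0..<a]"] set_batches[of t "[a..<a + m]"]
  by (auto simp: block_labels_def)

lemma count_list_block_labels:
  "count_list (block_labels a s m t) b = (if b < a then s else if b < a + m then t else 0)"
  by (simp add: block_labels_def count_list_batches count_list_upt)

definition seqI1_sizes :: "nat \<Rightarrow> real list" where
  "seqI1_sizes N = map (\<lambda>k. 1 / 7 ^ (N - k)) [0..<N]"

lemma seqI1_eq_batches: "seqI1 M N = batches M (seqI1_sizes N)"
  by (simp add: seqI1_def batches_def seqI1_sizes_def comp_def)

lemma seqI1_sizes_nonneg: "x \<in> set (seqI1_sizes N) \<Longrightarrow> 0 \<le> x"
  by (auto simp: seqI1_sizes_def)

lemma sum_seqI1_sizes: "sum_list (seqI1_sizes N) = (1 - 1 / 7 ^ N) / 6"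
proof (induction N)
  case (Suc N)
  have "seqI1_sizes (Suc N) = map (\<lambda>x. x / 7) (seqI1_sizes N) @ [1 / 7]"
    unfolding seqI1_sizes_def by (auto simp: Suc_diff_le)
  moreover have "sum_list (map (\<lambda>x. x / 7) xs) = sum_list xs / 7" for xs :: "real list"
    by (induction xs) (simp_all add: add_divide_distrib)
  ultimately show ?case using Suc.IH by (simp add: field_simps)
qed (simp add: seqI1_sizes_def)

lemma sum_seqI1_sizes_less: "sum_list (seqI1_sizes N) < 1 / 6"
  by (simp add: sum_seqI1_sizes)

lemma OPT_batches_thirds_le:
  assumes nonneg: "\<And>x. x \<in> set xs \<Longrightarrow> 0 \<le> x" and small: "sum_list xs < 1 / 6"
  shows "OPT (batches (8 * q) (xs @ [1 / 3])) \<le> 3 * q"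
  using small sum_list_nonneg[OF nonneg]
  by (intro OPT_batches_le[where
        ls = "replicate (length xs) (block_labels (2 * q) 2 q 4) @ [block_labels (2 * q) 3 q 2]"])
    (auto simp: nonneg length_block_labels count_list_block_labels zip_append zip_replicate2
      comp_def butlast_append butlast_conv_take sum_list_concat_replicate sum_list_replicate
      dest!: block_labels_less)

lemma OPT_batches_thirds_halves_le:
  assumes nonneg: "\<And>x. x \<in> set xs \<Longrightarrow> 0 \<le> x" and small: "sum_list xs < 1 / 6"
  shows "OPT (batches (3 * p) (xs @ [1 / 3, 1 / 2])) \<le> 2 * p"
  using small sum_list_nonneg[OF nonneg]
  by (intro OPT_batches_le[where
        ls = "replicate (Suc (length xs)) (block_labels p 2 p 1) @ [block_labels p 1 p 2]"])
    (auto simp: nonneg length_block_labels count_list_block_labels replicate_append_same[symmetric]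
      zip_append zip_replicate2 comp_def butlast_append butlast_conv_take
      sum_list_concat_replicate sum_list_replicate dest!: block_labels_less)

theorem mainTheorem11:
  fixes M N :: nat
  assumes "M \<ge> 3" and "N \<ge> 3" and "fact (7 ^ (N + 1)) dvd M"
  shows "real (OPT (seqI1 M N @ replicate M (1/3))) \<le> 3 * real M / 8
       \<and> real (OPT (seqI1 M N @ replicate M (1/3) @ replicate M (1/2))) \<le> 2 * real M / 3
       \<and> real (OPT (seqI1 M N @ replicate M (1/3) @ replicate (2 * M) (1/2))) \<le> real M
       \<and> real (OPT (seqI1 M N @ replicate M (1/3) @ replicate M (1/2) @ replicate M 1)) \<le> real M"
proof -
  have "1 \<le> (7 :: nat) ^ N" by simp
  then have "(4 :: nat) \<le> 7 ^ (N + 1)" unfolding power_add power_one_right by linarith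
  then have "fact 4 dvd (fact (7 ^ (N + 1)) :: nat)" by (rule fact_dvd)
  then obtain t where M: "M = 24 * t"
    using assms(3) by (auto simp: fact_numeral elim!: dvdE dest: dvd_trans)
  let ?xs = "seqI1_sizes N"
  have nonneg: "\<And>x. x \<in> set ?xs \<Longrightarrow> 0 \<le> x" by (rule seqI1_sizes_nonneg)
  have small: "sum_list ?xs < 1 / 6" by (rule sum_seqI1_sizes_less)
  have "OPT (batches (8 * (3 * t)) (?xs @ [1 / 3])) \<le> 3 * (3 * t)"
    using OPT_batches_thirds_le[OF nonneg small] .
  moreover have "OPT (batches (3 * (8 * t)) (?xs @ [1 / 3, 1 / 2])) \<le> 2 * (8 * t)"
    using OPT_batches_thirds_halves_le[OF nonneg small] .
  moreover have "OPT (batches M (?xs @ [1 / 3, 1 / 2, 1 / 2])) \<le> M"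
    using small by (intro OPT_batches_le_batch_size) (auto simp: nonneg butlast_append)
  moreover have "OPT (batches M (?xs @ [1 / 3, 1 / 2, 1])) \<le> M"
    using small by (intro OPT_batches_le_batch_size) (auto simp: nonneg butlast_append)
  ultimately show ?thesis
    unfolding seqI1_eq_batches mult_2 replicate_add by (simp add: M)
qed

end
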